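(* Every WM set $S\subset\mathbb{N}$ contains an IP-set, i.e. there is a sequence $p_1,p_2,\dots$ of natural numbers such that $\{p_{i_1}+\dots+p_{i_k}: k\in\mathbb{N},\ i_1<\dots<i_k\}\subset S$.
   Context: $\mathbb{N}=\{1,2,\dots\}$. An IP-set is a set of the form $\{p_{i_1}+\dots+p_{i_k}: k\in\mathbb{N},\ i_1<\dots<i_k\}$ for an infinite sequence $(p_i)$ of natural numbers (not necessarily distinct). $\Omega=\{0,1\}^{\mathbb{N}}$ with product topology and left shift $T$; $X_{1_S}$ is the closure of $\{T^n1_S:n\ge0\}$. A point $\xi$ is generic for $(X,\mu,T)$ if $\frac1N\sum_{n=0}^{N-1}f(T^n\xi)\to\int f\,d\mu$ for all continuous $f$. $d(S)=\lim_N\frac1N|S\cap\{1,\dots,N\}|$. $S$ is a WM set if for some $T$-invariant Borel probability $\mu$ on $X_{1_S}$, $1_S$ is generic for $(X_{1_S},\mu,T)$, this system is weakly mixing, and $d(S)>0$. *)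

theory Defs
  imports "HOL-Analysis.Analysis" "HOL-Probability.Probability"
begin

text \<open>Omega = {0,1}^N is modelled as nat \<Rightarrow> bool with the product topology
  (bool carries the discrete topology). Coordinate i corresponds to position i+1.\<close>

definition shift :: "(nat \<Rightarrow> bool) \<Rightarrow> (nat \<Rightarrow> bool)" where
  "shift x = (\<lambda>i. x (Suc i))"

definition indic_seq :: "nat set \<Rightarrow> (nat \<Rightarrow> bool)" where
  "indic_seq S = (\<lambda>i. Suc i \<in> S)"

definition orbit_closure :: "(nat \<Rightarrow> bool) \<Rightarrow> (nat \<Rightarrow> bool) set" where
  "orbit_closure x = closure {(shift ^^ n) x | n. True}"

definition invariant_borel_prob :: "(nat \<Rightarrow> bool) set \<Rightarrow> (nat \<Rightarrow> bool) measure \<Rightarrow> bool" where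
  "invariant_borel_prob X \<mu> \<longleftrightarrow>
     sets \<mu> = sets (restrict_space borel X) \<and> prob_space \<mu> \<and>
     shift \<in> measurable \<mu> \<mu> \<and>
     (\<forall>A\<in>sets \<mu>. measure \<mu> (shift -` A \<inter> space \<mu>) = measure \<mu> A)"

definition generic_point :: "(nat \<Rightarrow> bool) set \<Rightarrow> (nat \<Rightarrow> bool) measure \<Rightarrow> (nat \<Rightarrow> bool) \<Rightarrow> bool" where
  "generic_point X \<mu> \<xi> \<longleftrightarrow>
     (\<forall>f :: (nat \<Rightarrow> bool) \<Rightarrow> real. continuous_on X f \<longrightarrow>
        (\<lambda>N. (\<Sum>n<N. f ((shift ^^ n) \<xi>)) / real N) \<longlonglongrightarrow> (\<integral>x. f x \<partial>\<mu>))"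

definition weakly_mixing :: "(nat \<Rightarrow> bool) measure \<Rightarrow> bool" where
  "weakly_mixing \<mu> \<longleftrightarrow>
     (\<forall>A\<in>sets \<mu>. \<forall>B\<in>sets \<mu>.
        (\<lambda>N. (\<Sum>n<N. \<bar>measure \<mu> ((shift ^^ n) -` A \<inter> space \<mu> \<inter> B)
                        - measure \<mu> A * measure \<mu> B\<bar>) / real N) \<longlonglongrightarrow> 0)"

definition has_density :: "nat set \<Rightarrow> real \<Rightarrow> bool" where
  "has_density S d \<longleftrightarrow> (\<lambda>N. real (card (S \<inter> {1..N})) / real N) \<longlonglongrightarrow> d"

definition WM_set :: "nat set \<Rightarrow> bool" where
  "WM_set S \<longleftrightarrow> (\<exists>\<mu>.
      invariant_borel_prob (orbit_closure (indic_seq S)) \<mu> \<and>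
      generic_point (orbit_closure (indic_seq S)) \<mu> (indic_seq S) \<and>
      weakly_mixing \<mu>) \<and>
    (\<exists>d>0. has_density S d)"

end

theory Submission
  imports Defs
begin

text \<open>Let \<open>X\<close> be the orbit closure of \<open>\<xi> = 1\<^sub>S\<close> and \<open>C\<^sub>P = {x. \<forall>s\<in>P. x s}\<close> for finite
  \<open>P\<close>, so that \<open>T\<^sup>q \<xi> \<in> C\<^sub>P\<close> means \<open>q + 1 + P \<subseteq> S\<close>. Starting from \<open>P = {0}\<close>, whose cylinder has
  measure \<open>d(S) > 0\<close>, we build finite sets \<open>P\<close> with \<open>\<mu>(C\<^sub>P) > 0\<close>. By genericity the times \<open>m\<close>
  with \<open>T\<^sup>m \<xi> \<in> C\<^sub>P\<close> have density \<open>\<mu>(C\<^sub>P) > 0\<close>, while by weak mixing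
  \<open>\<mu>(C\<^sub>P \<inter> T\<^sup>-\<^sup>q C\<^sub>P) \<rightarrow> \<mu>(C\<^sub>P)\<^sup>2\<close> along a set of \<open>q\<close> of density one. Hence some \<open>q = m + 1\<close> has
  both properties: \<open>q + P \<subseteq> S\<close> and \<open>P \<union> (q + P)\<close>, whose cylinder is \<open>C\<^sub>P \<inter> T\<^sup>-\<^sup>q C\<^sub>P\<close>, again has
  positive measure. Iterating, the set \<open>P\<^sub>k\<close> at stage \<open>k\<close> consists of all finite sums of
  \<open>q\<^sub>0, \<dots>, q\<^sub>k\<^sub>-\<^sub>1\<close>, so every finite sum ending with \<open>q\<^sub>k\<close> lies in \<open>q\<^sub>k + P\<^sub>k \<subseteq> S\<close>.\<close>

definition cylinder :: "nat set \<Rightarrow> (nat \<Rightarrow> bool) set" where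
  "cylinder P = {x. \<forall>s\<in>P. x s}"

lemma open_coordinate_eq: "open {x :: nat \<Rightarrow> bool. x s = b}"
proof -
  have "open ((\<lambda>x :: nat \<Rightarrow> bool. x s) -` {b})"
    using discrete_topology_class.open_discrete continuous_on_product_coordinates by (rule open_vimage)
  then show ?thesis
    by (simp add: vimage_def)
qed

lemma cylinder_eq_INT: "cylinder P = (\<Inter>s\<in>P. {x. x s = True})"
  by (auto simp: cylinder_def)

lemma open_cylinder: "finite P \<Longrightarrow> open (cylinder P)"
  unfolding cylinder_eq_INT by (intro open_INT ballI open_coordinate_eq)

lemma closed_cylinder: "closed (cylinder P)"
proof -
  have "closed {x :: nat \<Rightarrow> bool. x s = True}" for s
    using open_coordinate_eq[of s False] unfolding closed_def by (simp add: Collect_neg_eq)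
  then show ?thesis
    unfolding cylinder_eq_INT by (intro closed_INT ballI)
qed

lemma continuous_on_indicator_clopen:
  assumes "open A" and "closed A"
  shows "continuous_on X (indicator A :: 'a :: topological_space \<Rightarrow> real)"
proof (rule continuous_on_subset[OF _ subset_UNIV])
  have "indicator A -` V = (if 1 \<in> V then A else {}) \<union> (if 0 \<in> V then - A else {})"
    for V :: "real set"
    by (auto simp: indicator_def of_bool_def split: if_splits)
  then show "continuous_on UNIV (indicator A :: 'a \<Rightarrow> real)"
    using assms by (simp add: continuous_on_open_vimage open_Un open_Compl)
qed

lemma funpow_shift_apply: "(shift ^^ n) x s = x (n + s)"
  by (induction n arbitrary: x s) (auto simp: shift_def)

lemma vimage_funpow_shift_cylinder_Int:
  "(shift ^^ n) -` cylinder P \<inter> cylinder P = cylinder (P \<union> (+) n ` P)"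
  by (auto simp: cylinder_def funpow_shift_apply)

lemma sum_indicator_cylinder_0_indic_seq:
  "(\<Sum>n<N. indicator (cylinder {0}) ((shift ^^ n) (indic_seq S)) :: real)
     = real (card (S \<inter> {1..N}))"
proof (induction N)
  case (Suc N)
  have "S \<inter> {1..Suc N} = (if Suc N \<in> S then insert (Suc N) (S \<inter> {1..N}) else S \<inter> {1..N})"
    by (auto simp: le_Suc_eq)
  with Suc show ?case
    by (simp add: cylinder_def funpow_shift_apply indic_seq_def)
qed simp

text \<open>Otherwise \<open>a m \<le> b (m + 1) / \<epsilon>\<close> for all \<open>m\<close>, forcing the mean of \<open>a\<close> to vanish.\<close>

lemma Cesaro_mean_positive_meets_small:
  fixes a b :: "nat \<Rightarrow> real"
  assumes a_le_1: "\<And>m. a m \<le> 1" and b_nonneg: "\<And>n. 0 \<le> b n"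
    and mean_a: "(\<lambda>N. (\<Sum>n<N. a n) / real N) \<longlonglongrightarrow> \<alpha>" and "\<alpha> > 0"
    and mean_b: "(\<lambda>N. (\<Sum>n<N. b n) / real N) \<longlonglongrightarrow> 0" and "\<epsilon> > 0"
  shows "\<exists>m. a m \<noteq> 0 \<and> b (Suc m) < \<epsilon>"
proof (rule ccontr)
  assume no_witness: "\<not> ?thesis"
  then have a_le_b: "a m \<le> b (Suc m) / \<epsilon>" for m
  proof (cases "a m = 0")
    case True
    then show ?thesis
      using b_nonneg \<open>\<epsilon> > 0\<close> by simp
  next
    case False
    with no_witness have "\<epsilon> \<le> b (Suc m)"
      by (auto simp: not_less)
    then have "\<epsilon> * a m \<le> b (Suc m)"
      using mult_left_le[OF a_le_1[of m], of \<epsilon>] \<open>\<epsilon> > 0\<close> by linarith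
    then show ?thesis
      using \<open>\<epsilon> > 0\<close> by (simp add: field_simps)
  qed
  have sum_a_le: "(\<Sum>n<N. a n) \<le> (\<Sum>n<Suc N. b n) / \<epsilon>" for N
  proof -
    have "(\<Sum>n<N. a n) \<le> (\<Sum>n<N. b (Suc n)) / \<epsilon>"
      using sum_mono[of _ a "\<lambda>n. b (Suc n) / \<epsilon>", OF a_le_b] by (simp add: sum_divide_distrib)
    also have "\<dots> \<le> (\<Sum>n<Suc N. b n) / \<epsilon>"
      unfolding sum.lessThan_Suc_shift using b_nonneg[of 0] \<open>\<epsilon> > 0\<close> by (simp add: divide_right_mono)
    finally show ?thesis .
  qed
  define c where "c N = (\<Sum>n<Suc N. b n) / real (Suc N) * (real (Suc N) / real N) / \<epsilon>" for N
  have "c \<longlonglongrightarrow> 0 * 1 / \<epsilon>"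
    unfolding c_def using \<open>\<epsilon> > 0\<close>
    by (intro tendsto_intros LIMSEQ_Suc[OF mean_b] LIMSEQ_Suc_n_over_n) simp
  then have "c \<longlonglongrightarrow> 0"
    by simp
  moreover have "\<forall>\<^sub>F N in sequentially. (\<Sum>n<N. a n) / real N \<le> c N"
    using eventually_gt_at_top[of 0]
  proof eventually_elim
    case (elim N)
    then have "c N = (\<Sum>n<Suc N. b n) / \<epsilon> / real N"
      by (simp add: c_def)
    then show ?case
      using divide_right_mono[OF sum_a_le, of "real N"] by simp
  qed
  ultimately have "\<alpha> \<le> 0"
    using tendsto_le[OF sequentially_bot _ mean_a] by blast
  with \<open>\<alpha> > 0\<close> show False
    by simp
qed

lemma subset_sum_mem_stage:
  fixes p :: "nat \<Rightarrow> nat" and Ps :: "nat \<Rightarrow> nat set"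
  assumes "0 \<in> Ps 0" and "\<And>k. Ps k \<union> (+) (p k) ` Ps k \<subseteq> Ps (Suc k)"
  shows "F \<subseteq> {..<k} \<Longrightarrow> sum p F \<in> Ps k"
proof (induction k arbitrary: F)
  case 0
  then show ?case
    using assms(1) by simp
next
  case (Suc k)
  show ?case
  proof (cases "k \<in> F")
    case True
    have "finite F"
      using Suc.prems finite_subset by blast
    with True have "sum p F = p k + sum p (F - {k})"
      by (simp add: sum.remove)
    moreover have "sum p (F - {k}) \<in> Ps k"
      using Suc.prems by (intro Suc.IH) auto
    ultimately show ?thesis
      using assms(2) by blast
  next
    case False
    then have "sum p F \<in> Ps k"
      using Suc.prems by (intro Suc.IH) (auto simp: less_Suc_eq)
    then show ?thesis
      using assms(2) by blast
  qed
qed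

lemma IP_set_from_extension_step:
  fixes S :: "nat set" and G :: "nat set \<Rightarrow> bool"
  assumes "G {0}"
    and step: "\<And>P. G P \<Longrightarrow> \<exists>q\<ge>1. (\<forall>s\<in>P. q + s \<in> S) \<and> G (P \<union> (+) q ` P)"
  shows "\<exists>p :: nat \<Rightarrow> nat. (\<forall>i. p i \<ge> 1) \<and> (\<forall>F. finite F \<and> F \<noteq> {} \<longrightarrow> (\<Sum>i\<in>F. p i) \<in> S)"
proof -
  obtain Q where Q: "\<And>P. G P \<Longrightarrow> Q P \<ge> 1 \<and> (\<forall>s\<in>P. Q P + s \<in> S) \<and> G (P \<union> (+) (Q P) ` P)"
    using step by metis
  define Ps where "Ps = rec_nat {0} (\<lambda>_ P. P \<union> (+) (Q P) ` P)"
  define p where "p k = Q (Ps k)" for k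
  have Ps_0: "Ps 0 = {0}" and Ps_Suc: "Ps (Suc k) = Ps k \<union> (+) (p k) ` Ps k" for k
    by (simp_all add: Ps_def p_def)
  have G_Ps: "G (Ps k)" for k
  proof (induction k)
    case 0
    then show ?case
      using \<open>G {0}\<close> by (simp add: Ps_0)
  next
    case (Suc k)
    then show ?case
      using Q[OF Suc.IH] by (simp add: Ps_Suc p_def)
  qed
  have p: "p k \<ge> 1" "\<And>s. s \<in> Ps k \<Longrightarrow> p k + s \<in> S" for k
    using Q[OF G_Ps] unfolding p_def by blast+
  have "sum p F \<in> S" if "finite F" "F \<noteq> {}" for F
  proof -
    define k where "k = Max F"
    have "k \<in> F"
      using that by (simp add: k_def)
    have "F - {k} \<subseteq> {..<k}"
    proof
      fix i assume "i \<in> F - {k}"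
      then have "i \<le> k" and "i \<noteq> k"
        using that by (auto simp: k_def)
      then show "i \<in> {..<k}"
        by simp
    qed
    then have "sum p (F - {k}) \<in> Ps k"
      by (rule subset_sum_mem_stage[of Ps p, rotated 2]) (simp_all add: Ps_0 Ps_Suc)
    moreover have "sum p F = p k + sum p (F - {k})"
      using \<open>finite F\<close> \<open>k \<in> F\<close> by (simp add: sum.remove)
    ultimately show ?thesis
      using p(2) by simp
  qed
  with p(1) show ?thesis
    by blast
qed

context
  fixes X :: "(nat \<Rightarrow> bool) set" and \<mu> :: "(nat \<Rightarrow> bool) measure" and \<xi> :: "nat \<Rightarrow> bool"
  assumes invariant: "invariant_borel_prob X \<mu>" and generic: "generic_point X \<mu> \<xi>"
begin

lemma space_invariant_measure: "space \<mu> = X"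
proof -
  have "sets \<mu> = sets (restrict_space borel X)"
    using invariant by (simp add: invariant_borel_prob_def)
  then show ?thesis
    using sets_eq_imp_space_eq[of \<mu>] by (simp add: space_restrict_space)
qed

lemma funpow_shift_in_space: "x \<in> X \<Longrightarrow> (shift ^^ n) x \<in> X"
proof (induction n)
  case (Suc n)
  have "shift \<in> measurable \<mu> \<mu>"
    using invariant by (simp add: invariant_borel_prob_def)
  with Suc show ?case
    using measurable_space[of shift \<mu> \<mu>] by (simp add: space_invariant_measure)
qed simp

lemma cylinder_Int_sets: "finite P \<Longrightarrow> cylinder P \<inter> X \<in> sets \<mu>"
  using invariant open_cylinder
  by (auto simp: invariant_borel_prob_def sets_restrict_space)

lemma mean_visits_cylinder:
  assumes "finite P"
  shows "(\<lambda>N. (\<Sum>n<N. indicator (cylinder P) ((shift ^^ n) \<xi>)) / real N)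
     \<longlonglongrightarrow> measure \<mu> (cylinder P \<inter> X)"
proof -
  have "(\<lambda>N. (\<Sum>n<N. indicator (cylinder P) ((shift ^^ n) \<xi>)) / real N)
          \<longlonglongrightarrow> integral\<^sup>L \<mu> (indicator (cylinder P))"
    using generic continuous_on_indicator_clopen[OF open_cylinder[OF assms] closed_cylinder]
    unfolding generic_point_def by blast
  then show ?thesis
    by (simp add: space_invariant_measure)
qed

lemma mean_correlation_cylinder:
  assumes "weakly_mixing \<mu>" and "finite P"
  shows "(\<lambda>N. (\<Sum>n<N. \<bar>measure \<mu> (cylinder (P \<union> (+) n ` P) \<inter> X)
            - measure \<mu> (cylinder P \<inter> X) ^ 2\<bar>) / real N) \<longlonglongrightarrow> 0"
proof -
  have correlation_set: "(shift ^^ n) -` (cylinder P \<inter> X) \<inter> space \<mu> \<inter> (cylinder P \<inter> X)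
          = cylinder (P \<union> (+) n ` P) \<inter> X" for n
    using funpow_shift_in_space vimage_funpow_shift_cylinder_Int[of n P]
    by (auto simp: space_invariant_measure)
  have "(\<lambda>N. (\<Sum>n<N. \<bar>measure \<mu> ((shift ^^ n) -` (cylinder P \<inter> X) \<inter> space \<mu> \<inter> (cylinder P \<inter> X))
          - measure \<mu> (cylinder P \<inter> X) * measure \<mu> (cylinder P \<inter> X)\<bar>) / real N) \<longlonglongrightarrow> 0"
    using assms cylinder_Int_sets unfolding weakly_mixing_def by blast
  then show ?thesis
    unfolding correlation_set power2_eq_square .
qed

lemma return_with_positive_overlap:
  assumes "weakly_mixing \<mu>" and "finite P" and pos: "measure \<mu> (cylinder P \<inter> X) > 0"
  shows "\<exists>m. (shift ^^ m) \<xi> \<in> cylinder P \<and>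
           measure \<mu> (cylinder (P \<union> (+) (Suc m) ` P) \<inter> X) > 0"
proof -
  let ?\<beta> = "measure \<mu> (cylinder P \<inter> X)"
  obtain m where "indicator (cylinder P) ((shift ^^ m) \<xi>) \<noteq> (0 :: real)"
    and "\<bar>measure \<mu> (cylinder (P \<union> (+) (Suc m) ` P) \<inter> X) - ?\<beta> ^ 2\<bar> < ?\<beta> ^ 2"
    by (rule Cesaro_mean_positive_meets_small[OF _ _ mean_visits_cylinder[OF \<open>finite P\<close>] pos
          mean_correlation_cylinder[OF assms(1,2)], where \<epsilon> = "?\<beta> ^ 2", elim_format])
      (use pos in \<open>auto simp: indicator_def\<close>)
  then show ?thesis
    by (auto simp: indicator_def abs_less_iff split: if_splits)
qed

end

theorem mainTheorem7:
  fixes S :: "nat set"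
  assumes "S \<subseteq> {1..}" and "WM_set S"
  shows "\<exists>p :: nat \<Rightarrow> nat. (\<forall>i. p i \<ge> 1) \<and>
           (\<forall>F. finite F \<and> F \<noteq> {} \<longrightarrow> (\<Sum>i\<in>F. p i) \<in> S)"
proof -
  define X where "X = orbit_closure (indic_seq S)"
  obtain \<mu> d where inv: "invariant_borel_prob X \<mu>" and gen: "generic_point X \<mu> (indic_seq S)"
    and wm: "weakly_mixing \<mu>" and "d > 0" and dens: "has_density S d"
    using assms(2) unfolding WM_set_def X_def by blast
  define G where "G P \<longleftrightarrow> finite P \<and> measure \<mu> (cylinder P \<inter> X) > 0" for P
  have "measure \<mu> (cylinder {0} \<inter> X) = d"
    using LIMSEQ_unique[OF mean_visits_cylinder[OF inv gen, of "{0}"]] dens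
    by (simp add: sum_indicator_cylinder_0_indic_seq has_density_def)
  with \<open>d > 0\<close> have "G {0}"
    by (simp add: G_def)
  moreover have "\<exists>q\<ge>1. (\<forall>s\<in>P. q + s \<in> S) \<and> G (P \<union> (+) q ` P)" if "G P" for P
  proof -
    obtain m where "(shift ^^ m) (indic_seq S) \<in> cylinder P"
      and "measure \<mu> (cylinder (P \<union> (+) (Suc m) ` P) \<inter> X) > 0"
      using return_with_positive_overlap[OF inv gen wm] \<open>G P\<close> by (auto simp: G_def)
    with \<open>G P\<close> show ?thesis
      by (intro exI[of _ "Suc m"]) (auto simp: G_def cylinder_def funpow_shift_apply indic_seq_def)
  qed
  ultimately show ?thesis
    by (rule IP_set_from_extension_step)
qed

end
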